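(* Let $X$ be a nonnegative random variable with support $(0,+\infty)$, having finite CIGF $G_X(\alpha,\beta)$ for $(\alpha,\beta)\in D_X$. Assume the moment generating function $M_X(s)=\mathbb{E}(e^{sX})$ satisfies $M_X(s)<+\infty$ for all $s\in(-s_0,s_0)$, for some $s_0>0$. Then: (i) for all $s_1\in(-s_0,0)$, $s_2\in(0,s_0)$ and $(\alpha,\beta)\in D_X$ with $\alpha>0,\beta>0$ and $\alpha s_1+\beta s_2>0$, $$G_X(\alpha,\beta)\le\frac{1}{\alpha s_1+\beta s_2}[M_X(s_1)]^\alpha[M_X(s_2)]^\beta;$$ (ii) for all $s_1\in(-s_0,0)$, $s_2\in(0,s_0)$ and $(\alpha,\beta)\in D_X$ with $\alpha<0,\beta<0$ and $\alpha s_1+\beta s_2>0$, $$G_X(\alpha,\beta)\ge\frac{1}{\alpha s_1+\beta s_2}[M_X(s_1)]^\alpha[M_X(s_2)]^\beta.$$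
   Context: For a random variable $X$ with CDF $F$ and survival function $\overline F=1-F$, let $l=\inf\{x:F(x)>0\}$, $r=\sup\{x:\overline F(x)>0\}$. The CIGF of $X$ is $G_X(\alpha,\beta)=\int_l^r [F(x)]^\alpha[\overline F(x)]^\beta\,dx$ on $D_X=\{(\alpha,\beta)\in\mathbb{R}^2: G_X(\alpha,\beta)<\infty\}$. *)

theory Defs
  imports "HOL-Probability.Probability"
begin

definition rv_cdf :: "'a measure \<Rightarrow> ('a \<Rightarrow> real) \<Rightarrow> real \<Rightarrow> real" where
  "rv_cdf M X x = measure M {w \<in> space M. X w \<le> x}"

definition rv_surv :: "'a measure \<Rightarrow> ('a \<Rightarrow> real) \<Rightarrow> real \<Rightarrow> real" where
  "rv_surv M X x = 1 - rv_cdf M X x"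

definition cigf_l :: "'a measure \<Rightarrow> ('a \<Rightarrow> real) \<Rightarrow> ereal" where
  "cigf_l M X = Inf {ereal x | x. rv_cdf M X x > 0}"

definition cigf_r :: "'a measure \<Rightarrow> ('a \<Rightarrow> real) \<Rightarrow> ereal" where
  "cigf_r M X = Sup {ereal x | x. rv_surv M X x > 0}"

definition cigf_ext :: "'a measure \<Rightarrow> ('a \<Rightarrow> real) \<Rightarrow> real \<Rightarrow> real \<Rightarrow> ennreal" where
  "cigf_ext M X \<alpha> \<beta> =
     (\<integral>\<^sup>+ x. indicator {x. cigf_l M X < ereal x \<and> ereal x < cigf_r M X} x *
        ennreal (rv_cdf M X x powr \<alpha> * rv_surv M X x powr \<beta>) \<partial>lborel)"

definition cigf_domain :: "'a measure \<Rightarrow> ('a \<Rightarrow> real) \<Rightarrow> (real \<times> real) set" where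
  "cigf_domain M X = {(\<alpha>, \<beta>). cigf_ext M X \<alpha> \<beta> < \<infinity>}"

definition cigf :: "'a measure \<Rightarrow> ('a \<Rightarrow> real) \<Rightarrow> real \<Rightarrow> real \<Rightarrow> real" where
  "cigf M X \<alpha> \<beta> = enn2real (cigf_ext M X \<alpha> \<beta>)"

definition mgf :: "'a measure \<Rightarrow> ('a \<Rightarrow> real) \<Rightarrow> real \<Rightarrow> real" where
  "mgf M X s = (\<integral> w. exp (s * X w) \<partial>M)"

end

(* Chernoff's bound gives F(x) \<le> M(s1) exp(-s1 x) for s1 < 0 and Fbar(x) \<le> M(s2) exp(-s2 x)
   for s2 > 0. Raising these to the powers \<alpha>, \<beta> preserves the inequalities when both are
   positive and reverses them when both are negative (the latter needs F, Fbar > 0, i.e. x inside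
   the support), so F(x)^\<alpha> Fbar(x)^\<beta> is compared pointwise on (0, \<infinity>) with
   M(s1)^\<alpha> M(s2)^\<beta> exp(-(\<alpha> s1 + \<beta> s2) x), whose integral is the claimed bound. *)

theory Submission
  imports Defs
begin

lemma set_integrable_space:
  fixes f :: "'a \<Rightarrow> 'b::{banach, second_countable_topology}"
  assumes "integrable M f"
  shows "set_integrable M (space M) f"
  unfolding set_integrable_def using assms by (intro integrable_mult_indicator) auto

lemma (in prob_space) rv_cdf_mono:
  assumes "X \<in> borel_measurable M" "x \<le> y"
  shows "rv_cdf M X x \<le> rv_cdf M X y"
  unfolding rv_cdf_def using assms by (intro finite_measure_mono) auto

lemma (in prob_space) rv_surv_eq_prob:
  assumes "X \<in> borel_measurable M"
  shows "rv_surv M X x = prob {w \<in> space M. x < X w}"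
proof -
  have "{w \<in> space M. x < X w} = space M - {w \<in> space M. X w \<le> x}"
    by auto
  then show ?thesis
    unfolding rv_surv_def rv_cdf_def using assms by (simp add: prob_compl)
qed

lemma (in prob_space) rv_cdf_pos:
  assumes "X \<in> borel_measurable M" "cigf_l M X < ereal x"
  shows "0 < rv_cdf M X x"
proof -
  obtain y where "0 < rv_cdf M X y" "y < x"
    using assms(2) unfolding cigf_l_def by (auto simp: Inf_less_iff)
  with rv_cdf_mono[OF assms(1), of y x] show ?thesis by simp
qed

lemma (in prob_space) rv_surv_pos:
  assumes "X \<in> borel_measurable M" "ereal x < cigf_r M X"
  shows "0 < rv_surv M X x"
proof -
  obtain y where "0 < rv_surv M X y" "x < y"
    using assms(2) unfolding cigf_r_def by (auto simp: less_Sup_iff)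
  with rv_cdf_mono[OF assms(1), of x y] show ?thesis by (simp add: rv_surv_def)
qed

lemma (in prob_space) rv_cdf_le_mgf_exp:
  assumes "X \<in> borel_measurable M" "s < 0" "integrable M (\<lambda>w. exp (s * X w))"
  shows "rv_cdf M X x \<le> mgf M X s * exp (- s * x)"
proof -
  have "rv_cdf M X x \<le> exp (- s * x) * (\<integral>w\<in>space M. exp (- (- s) * X w) \<partial>M)"
    using assms unfolding rv_cdf_def
    by (intro Chernoff_ineq_le) (auto intro: set_integrable_space)
  with assms(3) show ?thesis by (simp add: mgf_def set_integral_space mult.commute)
qed

lemma (in prob_space) rv_surv_le_mgf_exp:
  assumes "X \<in> borel_measurable M" "0 < s" "integrable M (\<lambda>w. exp (s * X w))"
  shows "rv_surv M X x \<le> mgf M X s * exp (- s * x)"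
proof -
  have "rv_surv M X x \<le> prob {w \<in> space M. x \<le> X w}"
    unfolding rv_surv_eq_prob[OF assms(1)] using assms(1) by (intro finite_measure_mono) auto
  also have "\<dots> \<le> exp (- s * x) * (\<integral>w\<in>space M. exp (s * X w) \<partial>M)"
    using assms
    by (intro Chernoff_ineq_ge) (auto intro: set_integrable_space)
  finally show ?thesis using assms(3) by (simp add: mgf_def set_integral_space mult.commute)
qed

lemma mult_exp_powr_product:
  fixes m1 m2 :: real
  shows "(m1 * exp (- s1 * x)) powr \<alpha> * (m2 * exp (- s2 * x)) powr \<beta>
           = m1 powr \<alpha> * m2 powr \<beta> * exp (- (\<alpha> * s1 + \<beta> * s2) * x)"
  by (simp add: powr_mult exp_powr_real algebra_simps flip: exp_add)

lemma (in prob_space) rv_cdf_powr_rv_surv_powr_le: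
  assumes "X \<in> borel_measurable M" "s1 < 0" "0 < s2"
    and "integrable M (\<lambda>w. exp (s1 * X w))" "integrable M (\<lambda>w. exp (s2 * X w))"
    and "0 \<le> \<alpha>" "0 \<le> \<beta>"
  shows "rv_cdf M X x powr \<alpha> * rv_surv M X x powr \<beta>
           \<le> mgf M X s1 powr \<alpha> * mgf M X s2 powr \<beta> * exp (- (\<alpha> * s1 + \<beta> * s2) * x)"
proof -
  have "rv_cdf M X x powr \<alpha> \<le> (mgf M X s1 * exp (- s1 * x)) powr \<alpha>"
    using assms by (intro powr_mono2 rv_cdf_le_mgf_exp) (auto simp: rv_cdf_def)
  moreover have "rv_surv M X x powr \<beta> \<le> (mgf M X s2 * exp (- s2 * x)) powr \<beta>"
    using assms by (intro powr_mono2 rv_surv_le_mgf_exp) (auto simp: rv_surv_eq_prob)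
  ultimately show ?thesis
    unfolding mult_exp_powr_product[symmetric] by (intro mult_mono) auto
qed

lemma (in prob_space) rv_cdf_powr_rv_surv_powr_ge:
  assumes "X \<in> borel_measurable M" "s1 < 0" "0 < s2"
    and "integrable M (\<lambda>w. exp (s1 * X w))" "integrable M (\<lambda>w. exp (s2 * X w))"
    and "\<alpha> \<le> 0" "\<beta> \<le> 0" "cigf_l M X < ereal x" "ereal x < cigf_r M X"
  shows "mgf M X s1 powr \<alpha> * mgf M X s2 powr \<beta> * exp (- (\<alpha> * s1 + \<beta> * s2) * x)
           \<le> rv_cdf M X x powr \<alpha> * rv_surv M X x powr \<beta>"
proof -
  have "(mgf M X s1 * exp (- s1 * x)) powr \<alpha> \<le> rv_cdf M X x powr \<alpha>"
    using assms by (intro powr_mono2' rv_cdf_le_mgf_exp rv_cdf_pos)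
  moreover have "(mgf M X s2 * exp (- s2 * x)) powr \<beta> \<le> rv_surv M X x powr \<beta>"
    using assms by (intro powr_mono2' rv_surv_le_mgf_exp rv_surv_pos)
  ultimately show ?thesis
    unfolding mult_exp_powr_product[symmetric] by (intro mult_mono) auto
qed

lemma nn_integral_exp_decay:
  fixes c K :: real
  assumes "0 < c" "0 \<le> K"
  shows "(\<integral>\<^sup>+ x. indicator {0<..} x * ennreal (K * exp (- c * x)) \<partial>lborel) = ennreal (K / c)"
proof -
  have "((\<lambda>x. K * exp (- c * x)) has_integral K / c) {0..}"
    using has_integral_mult_right[OF has_integral_exp_minus_to_infinity[OF assms(1), of 0], of K]
    by simp
  then have "((\<lambda>x. K * exp (- c * x)) has_integral K / c) {0<..}"
    by (rule has_integral_spike_set_eq[THEN iffD1, rotated 2])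
       (auto intro: negligible_subset[of "{0}"])
  then have "(\<integral>\<^sup>+ x. ennreal (indicator {0<..} x * (K * exp (- c * x))) \<partial>lborel) = ennreal (K / c)"
    using assms by (intro nn_integral_has_integral_lebesgue) auto
  then show ?thesis
    by (simp add: indicator_mult_ennreal mult.commute)
qed

lemma cigf_le_mgf_bound:
  assumes "prob_space M" "X \<in> borel_measurable M" "0 \<le> cigf_l M X"
    and "s1 < 0" "0 < s2"
    and "integrable M (\<lambda>w. exp (s1 * X w))" "integrable M (\<lambda>w. exp (s2 * X w))"
    and "0 \<le> \<alpha>" "0 \<le> \<beta>" "0 < \<alpha> * s1 + \<beta> * s2"
  shows "cigf M X \<alpha> \<beta> \<le> mgf M X s1 powr \<alpha> * mgf M X s2 powr \<beta> / (\<alpha> * s1 + \<beta> * s2)"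
proof -
  interpret prob_space M by fact
  define K where "K = mgf M X s1 powr \<alpha> * mgf M X s2 powr \<beta>"
  define c where "c = \<alpha> * s1 + \<beta> * s2"
  have "cigf_ext M X \<alpha> \<beta> \<le> (\<integral>\<^sup>+ x. indicator {0<..} x * ennreal (K * exp (- c * x)) \<partial>lborel)"
    unfolding cigf_ext_def
  proof (intro nn_integral_mono)
    fix x
    show "indicator {x. cigf_l M X < ereal x \<and> ereal x < cigf_r M X} x
            * ennreal (rv_cdf M X x powr \<alpha> * rv_surv M X x powr \<beta>)
          \<le> indicator {0<..} x * ennreal (K * exp (- c * x))"
    proof (cases "cigf_l M X < ereal x \<and> ereal x < cigf_r M X")
      case True
      with assms(3) have "0 < ereal x"
        by (meson order_le_less_trans)
      with True show ?thesis
        using rv_cdf_powr_rv_surv_powr_le[OF assms(2,4-9)] unfolding K_def c_def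
        by (simp add: ennreal_leI)
    qed auto
  qed
  also have "\<dots> = ennreal (K / c)"
    using assms(10) by (intro nn_integral_exp_decay) (auto simp: K_def c_def)
  finally show ?thesis
    unfolding cigf_def K_def c_def using assms(10) by (intro enn2real_leI) auto
qed

lemma cigf_ge_mgf_bound:
  assumes "prob_space M" "X \<in> borel_measurable M" "cigf_l M X \<le> 0" "cigf_r M X = \<infinity>"
    and "s1 < 0" "0 < s2"
    and "integrable M (\<lambda>w. exp (s1 * X w))" "integrable M (\<lambda>w. exp (s2 * X w))"
    and "(\<alpha>, \<beta>) \<in> cigf_domain M X" "\<alpha> \<le> 0" "\<beta> \<le> 0" "0 < \<alpha> * s1 + \<beta> * s2"
  shows "mgf M X s1 powr \<alpha> * mgf M X s2 powr \<beta> / (\<alpha> * s1 + \<beta> * s2) \<le> cigf M X \<alpha> \<beta>"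
proof -
  interpret prob_space M by fact
  define K where "K = mgf M X s1 powr \<alpha> * mgf M X s2 powr \<beta>"
  define c where "c = \<alpha> * s1 + \<beta> * s2"
  have "ennreal (K / c) = (\<integral>\<^sup>+ x. indicator {0<..} x * ennreal (K * exp (- c * x)) \<partial>lborel)"
    using assms(12) by (intro nn_integral_exp_decay[symmetric]) (auto simp: K_def c_def)
  also have "\<dots> \<le> cigf_ext M X \<alpha> \<beta>"
    unfolding cigf_ext_def
  proof (intro nn_integral_mono)
    fix x
    show "indicator {0<..} x * ennreal (K * exp (- c * x))
          \<le> indicator {x. cigf_l M X < ereal x \<and> ereal x < cigf_r M X} x
            * ennreal (rv_cdf M X x powr \<alpha> * rv_surv M X x powr \<beta>)"
    proof (cases "0 < x")
      case True
      with assms(3) have "cigf_l M X < ereal x"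
        by (simp add: order_le_less_trans)
      with True show ?thesis
        using rv_cdf_powr_rv_surv_powr_ge[OF assms(2,5-8,10,11)] assms(4) unfolding K_def c_def
        by (simp add: ennreal_leI)
    qed auto
  qed
  \<comment> \<open>finiteness is essential here: \<open>enn2real\<close> maps an infinite integral to 0\<close>
  finally have "enn2real (ennreal (K / c)) \<le> cigf M X \<alpha> \<beta>"
    using assms(9) unfolding cigf_def cigf_domain_def by (intro enn2real_mono) auto
  then show ?thesis
    using assms(12) by (simp add: K_def c_def)
qed

theorem corollary1:
  fixes M :: "'a measure" and X :: "'a \<Rightarrow> real" and s0 :: real
  assumes "prob_space M"
    and "X \<in> borel_measurable M"
    and "AE w in M. X w \<ge> 0"
    and "cigf_l M X = 0" and "cigf_r M X = \<infinity>"
    and "s0 > 0"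
    and "\<And>s. s \<in> {-s0<..<s0} \<Longrightarrow> integrable M (\<lambda>w. exp (s * X w))"
  shows "(\<forall>s1 \<in> {-s0<..<0}. \<forall>s2 \<in> {0<..<s0}. \<forall>\<alpha> \<beta>.
            (\<alpha>, \<beta>) \<in> cigf_domain M X \<and> \<alpha> > 0 \<and> \<beta> > 0 \<and> \<alpha> * s1 + \<beta> * s2 > 0 \<longrightarrow>
              cigf M X \<alpha> \<beta> \<le> (1 / (\<alpha> * s1 + \<beta> * s2)) * (mgf M X s1 powr \<alpha>) * (mgf M X s2 powr \<beta>))
       \<and> (\<forall>s1 \<in> {-s0<..<0}. \<forall>s2 \<in> {0<..<s0}. \<forall>\<alpha> \<beta>.
            (\<alpha>, \<beta>) \<in> cigf_domain M X \<and> \<alpha> < 0 \<and> \<beta> < 0 \<and> \<alpha> * s1 + \<beta> * s2 > 0 \<longrightarrow>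
              cigf M X \<alpha> \<beta> \<ge> (1 / (\<alpha> * s1 + \<beta> * s2)) * (mgf M X s1 powr \<alpha>) * (mgf M X s2 powr \<beta>))"
proof (intro conjI ballI allI impI)
  fix s1 s2 \<alpha> \<beta>
  assume "s1 \<in> {-s0<..<0}" "s2 \<in> {0<..<s0}"
    and "(\<alpha>, \<beta>) \<in> cigf_domain M X \<and> 0 < \<alpha> \<and> 0 < \<beta> \<and> 0 < \<alpha> * s1 + \<beta> * s2"
  with assms show "cigf M X \<alpha> \<beta> \<le> 1 / (\<alpha> * s1 + \<beta> * s2) * mgf M X s1 powr \<alpha> * mgf M X s2 powr \<beta>"
    using cigf_le_mgf_bound[of M X s1 s2 \<alpha> \<beta>] by auto
next
  fix s1 s2 \<alpha> \<beta>
  assume "s1 \<in> {-s0<..<0}" "s2 \<in> {0<..<s0}"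
    and "(\<alpha>, \<beta>) \<in> cigf_domain M X \<and> \<alpha> < 0 \<and> \<beta> < 0 \<and> 0 < \<alpha> * s1 + \<beta> * s2"
  with assms show "1 / (\<alpha> * s1 + \<beta> * s2) * mgf M X s1 powr \<alpha> * mgf M X s2 powr \<beta> \<le> cigf M X \<alpha> \<beta>"
    using cigf_ge_mgf_bound[of M X s1 s2 \<alpha> \<beta>] by auto
qed

end
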